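(* (1) Co-commensurability is an equivalence relation on pairs $(G,\alpha)$ consisting of a compact group $G$ and an automorphism $\alpha$ of $G$. (2) Two such pairs $(H_1,\alpha_1)$ and $(H_2,\alpha_2)$ are co-commensurable if and only if there is a pair $(L,\gamma)$ (a compact group with automorphism) and surjective homomorphisms $\psi_i:H_i\to L$ with finite kernels satisfying $\gamma\circ\psi_i=\psi_i\circ\alpha_i$ for $i=1,2$.
   Context: Pairs $(G_1,\alpha_1)$ and $(G_2,\alpha_2)$ are co-commensurable if there is a pair $(G,\alpha)$ (compact group with automorphism) and surjective continuous homomorphisms $\varphi_i:G\to G_i$ with finite kernels satisfying $\varphi_i\circ\alpha=\alpha_i\circ\varphi_i$ for $i=1,2$. *)

theory Defs
  imports "HOL-Analysis.Analysis" "HOL-Algebra.Algebra"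
begin

definition compact_group :: "'a monoid \<Rightarrow> 'a topology \<Rightarrow> bool" where
  "compact_group G T \<longleftrightarrow> group G \<and> topspace T = carrier G
     \<and> continuous_map (prod_topology T T) T (\<lambda>(x, y). x \<otimes>\<^bsub>G\<^esub> y)
     \<and> continuous_map T T (m_inv G)
     \<and> compact_space T \<and> Hausdorff_space T"

definition top_group_aut :: "'a monoid \<Rightarrow> 'a topology \<Rightarrow> ('a \<Rightarrow> 'a) \<Rightarrow> bool" where
  "top_group_aut G T \<alpha> \<longleftrightarrow> \<alpha> \<in> iso G G \<and> homeomorphic_map T T \<alpha>"

definition cpair :: "'a monoid \<Rightarrow> 'a topology \<Rightarrow> ('a \<Rightarrow> 'a) \<Rightarrow> bool" where
  "cpair G T \<alpha> \<longleftrightarrow> compact_group G T \<and> top_group_aut G T \<alpha>"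

definition fk_epi :: "'a monoid \<Rightarrow> 'a topology \<Rightarrow> 'b monoid \<Rightarrow> 'b topology \<Rightarrow> ('a \<Rightarrow> 'b) \<Rightarrow> bool" where
  "fk_epi G T H S \<phi> \<longleftrightarrow> \<phi> \<in> hom G H \<and> continuous_map T S \<phi>
     \<and> \<phi> ` carrier G = carrier H \<and> finite (kernel G H \<phi>)"

definition cocomm_via :: "'c itself \<Rightarrow> 'a monoid \<Rightarrow> 'a topology \<Rightarrow> ('a \<Rightarrow> 'a)
    \<Rightarrow> 'b monoid \<Rightarrow> 'b topology \<Rightarrow> ('b \<Rightarrow> 'b) \<Rightarrow> bool" where
  "cocomm_via (_::'c itself) G1 T1 \<alpha>1 G2 T2 \<alpha>2 \<longleftrightarrow>
     (\<exists>(G::'c monoid) T \<alpha> \<phi>1 \<phi>2. cpair G T \<alpha>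
        \<and> fk_epi G T G1 T1 \<phi>1 \<and> fk_epi G T G2 T2 \<phi>2
        \<and> (\<forall>x\<in>carrier G. \<phi>1 (\<alpha> x) = \<alpha>1 (\<phi>1 x))
        \<and> (\<forall>x\<in>carrier G. \<phi>2 (\<alpha> x) = \<alpha>2 (\<phi>2 x)))"

definition cocodom_via :: "'c itself \<Rightarrow> 'a monoid \<Rightarrow> 'a topology \<Rightarrow> ('a \<Rightarrow> 'a)
    \<Rightarrow> 'b monoid \<Rightarrow> 'b topology \<Rightarrow> ('b \<Rightarrow> 'b) \<Rightarrow> bool" where
  "cocodom_via (_::'c itself) H1 T1 \<alpha>1 H2 T2 \<alpha>2 \<longleftrightarrow>
     (\<exists>(L::'c monoid) S \<gamma> \<psi>1 \<psi>2. cpair L S \<gamma>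
        \<and> fk_epi H1 T1 L S \<psi>1 \<and> fk_epi H2 T2 L S \<psi>2
        \<and> (\<forall>x\<in>carrier H1. \<gamma> (\<psi>1 x) = \<psi>1 (\<alpha>1 x))
        \<and> (\<forall>x\<in>carrier H2. \<gamma> (\<psi>2 x) = \<psi>2 (\<alpha>2 x)))"

end

theory Submission
  imports Defs
begin

text \<open>
  Symmetry is built into the definition and the identity gives reflexivity. The fibre product
  \<open>{(a, b). f a = g b}\<close> of finite-kernel epimorphisms \<open>f : A \<rightarrow> C\<close> and \<open>g : B \<rightarrow> C\<close> is a closed
  subgroup of \<open>A \<times> B\<close>, preserved by the product automorphism, and its projections are onto with
  kernels \<open>{1} \<times> ker g\<close> and \<open>ker f \<times> {1}\<close>. Over the middle group this gives transitivity, over a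
  common quotient \<open>L\<close> the converse half of (2). For the direct half, if \<open>G\<close> covers \<open>G\<^sub>1\<close> and \<open>G\<^sub>2\<close>
  via \<open>\<phi>\<^sub>1, \<phi>\<^sub>2\<close>, then \<open>N = \<phi>\<^sub>1(ker \<phi>\<^sub>2)\<close> is a finite normal \<open>\<alpha>\<^sub>1\<close>-invariant subgroup of \<open>G\<^sub>1\<close>.
  Finiteness of \<open>N\<close> makes \<open>G\<^sub>1 \<rightarrow> G\<^sub>1/N\<close> a closed map, so \<open>G\<^sub>1/N\<close> is a compact Hausdorff group,
  and \<open>\<phi>\<^sub>2\<close> induces \<open>G\<^sub>2 \<rightarrow> G\<^sub>1/N\<close> since \<open>\<phi>\<^sub>2\<close>, a continuous surjection between compact
  Hausdorff spaces, is a quotient map.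
\<close>

section \<open>Compact groups and finite-kernel epimorphisms\<close>

lemma compact_groupD:
  assumes "compact_group G T"
  shows "group G" and "topspace T = carrier G"
    and "continuous_map (prod_topology T T) T (\<lambda>(x, y). x \<otimes>\<^bsub>G\<^esub> y)"
    and "continuous_map T T (m_inv G)" and "compact_space T" and "Hausdorff_space T"
  using assms by (auto simp: compact_group_def)

lemma fk_epiD:
  assumes "fk_epi G T H S \<phi>"
  shows "\<phi> \<in> hom G H" and "continuous_map T S \<phi>" and "\<phi> ` carrier G = carrier H"
    and "finite (kernel G H \<phi>)"
  using assms by (auto simp: fk_epi_def)

lemma continuous_map_group_mult:
  assumes "compact_group G T" "continuous_map Z T u" "continuous_map Z T v"
  shows "continuous_map Z T (\<lambda>z. u z \<otimes>\<^bsub>G\<^esub> v z)"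
  using continuous_map_compose[OF continuous_map_pairedI[OF assms(2,3)] compact_groupD(3)[OF assms(1)]]
  by (simp add: o_def)

lemma continuous_map_group_inv:
  assumes "compact_group G T" "continuous_map Z T u"
  shows "continuous_map Z T (\<lambda>z. inv\<^bsub>G\<^esub> u z)"
  using continuous_map_compose[OF assms(2) compact_groupD(4)[OF assms(1)]] by (simp add: o_def)

lemma homeomorphic_map_left_translation:
  assumes "compact_group G T" "a \<in> carrier G"
  shows "homeomorphic_map T T (\<lambda>x. a \<otimes>\<^bsub>G\<^esub> x)"
proof -
  interpret group G using compact_groupD(1)[OF assms(1)] .
  have "continuous_map T T (\<lambda>x. b \<otimes>\<^bsub>G\<^esub> x)" if "b \<in> carrier G" for b
    using that compact_groupD(2)[OF assms(1)] by (intro continuous_map_group_mult[OF assms(1)]) auto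
  then have "homeomorphic_maps T T (\<lambda>x. a \<otimes>\<^bsub>G\<^esub> x) (\<lambda>x. inv\<^bsub>G\<^esub> a \<otimes>\<^bsub>G\<^esub> x)"
    using assms compact_groupD(2)[OF assms(1)] by (simp add: homeomorphic_maps_def m_assoc[symmetric])
  then show ?thesis
    using homeomorphic_map_maps by blast
qed

lemma top_group_autI:
  assumes "compact_group G T" "h \<in> hom G G" "bij_betw h (carrier G) (carrier G)"
    and "continuous_map T T h"
  shows "top_group_aut G T h"
  using assms continuous_imp_homeomorphic_map[OF assms(4)]
  by (auto simp: top_group_aut_def iso_def compact_group_def bij_betw_def)

lemma finite_vimage_hom:
  assumes "group_hom G H f" "finite (kernel G H f)" "finite S"
  shows "finite {x \<in> carrier G. f x \<in> S}"
proof -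
  interpret group_hom G H f by (fact assms(1))
  have fibre: "{x \<in> carrier G. f x = f a} \<subseteq> (\<lambda>k. a \<otimes>\<^bsub>G\<^esub> k) ` kernel G H f"
    if "a \<in> carrier G" for a
  proof
    fix x assume x: "x \<in> {x \<in> carrier G. f x = f a}"
    then have "inv\<^bsub>G\<^esub> a \<otimes>\<^bsub>G\<^esub> x \<in> kernel G H f"
      using that by (simp add: kernel_def)
    moreover have "x = a \<otimes>\<^bsub>G\<^esub> (inv\<^bsub>G\<^esub> a \<otimes>\<^bsub>G\<^esub> x)"
      using x that by (simp add: G.m_assoc[symmetric])
    ultimately show "x \<in> (\<lambda>k. a \<otimes>\<^bsub>G\<^esub> k) ` kernel G H f"
      by blast
  qed
  have "finite {x \<in> carrier G. f x = s}" for s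
  proof (cases "\<exists>a \<in> carrier G. f a = s")
    case True
    then obtain a where "a \<in> carrier G" "f a = s"
      by blast
    then show ?thesis
      using finite_subset[OF fibre finite_imageI[OF assms(2)]] by blast
  next
    case False
    then have "{x \<in> carrier G. f x = s} = {}"
      by blast
    then show ?thesis
      by (simp only: finite.emptyI)
  qed
  moreover have "{x \<in> carrier G. f x \<in> S} = (\<Union>s\<in>S. {x \<in> carrier G. f x = s})"
    by blast
  ultimately show ?thesis
    using assms(3) by simp
qed

lemma fk_epi_id:
  assumes "group G"
  shows "fk_epi G T G T (\<lambda>x. x)"
proof -
  have "kernel G G (\<lambda>x. x) \<subseteq> {\<one>\<^bsub>G\<^esub>}"
    by (auto simp: kernel_def)
  then show ?thesis
    using assms by (auto simp: fk_epi_def hom_def intro: finite_subset)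
qed

lemma fk_epi_comp:
  assumes "group A" "group B" "fk_epi A TA B TB f" "fk_epi B TB C TC g"
  shows "fk_epi A TA C TC (g \<circ> f)"
proof -
  have f: "group_hom A B f"
    using assms(1,2) fk_epiD(1)[OF assms(3)] by (simp add: group_hom_def group_hom_axioms_def)
  have "kernel A C (g \<circ> f) = {x \<in> carrier A. f x \<in> kernel B C g}"
    using fk_epiD(1)[OF assms(3)] by (auto simp: kernel_def hom_def)
  then have "finite (kernel A C (g \<circ> f))"
    using finite_vimage_hom[OF f] fk_epiD(4)[OF assms(3)] fk_epiD(4)[OF assms(4)] by simp
  moreover have "(g \<circ> f) ` carrier A = carrier C"
    unfolding image_comp[symmetric] using fk_epiD(3)[OF assms(3)] fk_epiD(3)[OF assms(4)] by simp
  ultimately show ?thesis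
    using fk_epiD(1,2)[OF assms(3)] fk_epiD(1,2)[OF assms(4)]
    by (simp add: fk_epi_def hom_compose continuous_map_compose)
qed

lemma hom_factors_through_surjective:
  assumes f: "group_hom G H f" and surj: "f ` carrier G = carrier H" and h: "group_hom G L h"
    and ker: "kernel G H f \<subseteq> kernel G L h"
  obtains \<psi> where "\<psi> \<in> hom H L" "\<And>x. x \<in> carrier G \<Longrightarrow> \<psi> (f x) = h x"
proof -
  interpret f: group_hom G H f by (fact f)
  interpret h: group_hom G L h by (fact h)
  have fibre: "h x = h x'" if x: "x \<in> carrier G" "x' \<in> carrier G" "f x = f x'" for x x'
  proof -
    have "inv\<^bsub>G\<^esub> x \<otimes>\<^bsub>G\<^esub> x' \<in> kernel G H f"
      using x by (simp add: kernel_def f.hom_inv)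
    then have "h (inv\<^bsub>G\<^esub> x \<otimes>\<^bsub>G\<^esub> x') = \<one>\<^bsub>L\<^esub>"
      using ker unfolding kernel_def by blast
    then have "h x \<otimes>\<^bsub>L\<^esub> h (inv\<^bsub>G\<^esub> x \<otimes>\<^bsub>G\<^esub> x') = h x"
      using x by simp
    also have "h x \<otimes>\<^bsub>L\<^esub> h (inv\<^bsub>G\<^esub> x \<otimes>\<^bsub>G\<^esub> x') = h (x \<otimes>\<^bsub>G\<^esub> (inv\<^bsub>G\<^esub> x \<otimes>\<^bsub>G\<^esub> x'))"
      using x by (intro h.hom_mult[symmetric]) auto
    finally show ?thesis
      using x by (simp add: f.G.m_assoc[symmetric])
  qed
  define \<psi> where "\<psi> y = h (SOME x. x \<in> carrier G \<and> f x = y)" for y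
  have \<psi>: "\<psi> (f x) = h x" if "x \<in> carrier G" for x
    using someI[of "\<lambda>x'. x' \<in> carrier G \<and> f x' = f x" x] that fibre unfolding \<psi>_def by metis
  have "\<psi> \<in> hom H L"
  proof (rule homI)
    fix y assume "y \<in> carrier H"
    then obtain x where "x \<in> carrier G" "y = f x"
      using surj by auto
    then show "\<psi> y \<in> carrier L"
      using \<psi> by simp
  next
    fix y y' assume "y \<in> carrier H" "y' \<in> carrier H"
    then obtain x x' where x: "x \<in> carrier G" "y = f x" "x' \<in> carrier G" "y' = f x'"
      using surj by (metis imageE)
    then have "\<psi> (y \<otimes>\<^bsub>H\<^esub> y') = \<psi> (f (x \<otimes>\<^bsub>G\<^esub> x'))"
      by simp
    also have "\<dots> = h x \<otimes>\<^bsub>L\<^esub> h x'"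
      using x \<psi>[of "x \<otimes>\<^bsub>G\<^esub> x'"] by simp
    finally show "\<psi> (y \<otimes>\<^bsub>H\<^esub> y') = \<psi> y \<otimes>\<^bsub>L\<^esub> \<psi> y'"
      using x \<psi> by simp
  qed
  then show thesis
    using that \<psi> by blast
qed

lemma fk_epi_factors_through:
  assumes G: "compact_group G T" and H: "compact_group H TH" and L: "group L"
    and f: "fk_epi G T H TH f" and h: "fk_epi G T L S h"
    and ker: "kernel G H f \<subseteq> kernel G L h"
  obtains \<psi> where "fk_epi H TH L S \<psi>" "\<And>x. x \<in> carrier G \<Longrightarrow> \<psi> (f x) = h x"
proof -
  have "group_hom G H f" "group_hom G L h"
    using compact_groupD(1)[OF G] compact_groupD(1)[OF H] L fk_epiD(1)[OF f] fk_epiD(1)[OF h]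
    by (simp_all add: group_hom_def group_hom_axioms_def)
  then obtain \<psi> where \<psi>: "\<psi> \<in> hom H L" and \<psi>f: "\<And>x. x \<in> carrier G \<Longrightarrow> \<psi> (f x) = h x"
    using hom_factors_through_surjective fk_epiD(3)[OF f] ker by metis
  have "\<psi> ` carrier H = carrier L"
    using fk_epiD(3)[OF f] fk_epiD(3)[OF h] \<psi>f by (metis (no_types, lifting) image_cong image_image)
  moreover have "kernel H L \<psi> \<subseteq> f ` kernel G L h"
  proof
    fix y assume "y \<in> kernel H L \<psi>"
    then have y: "y \<in> f ` carrier G" "\<psi> y = \<one>\<^bsub>L\<^esub>"
      using fk_epiD(3)[OF f] by (auto simp: kernel_def)
    then obtain x where "x \<in> carrier G" "y = f x"
      by blast
    then show "y \<in> f ` kernel G L h"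
      using y(2) \<psi>f by (auto simp: kernel_def)
  qed
  then have "finite (kernel H L \<psi>)"
    using fk_epiD(4)[OF h] finite_surj by blast
  moreover have "continuous_map TH S \<psi>"
  proof (rule continuous_compose_quotient_map)
    show "quotient_map T TH f"
      using f G H by (intro continuous_imp_quotient_map) (simp_all add: fk_epiD compact_groupD)
    show "continuous_map T S (\<psi> \<circ> f)"
      by (rule continuous_map_eq[OF fk_epiD(2)[OF h]]) (simp add: compact_groupD(2)[OF G] \<psi>f)
  qed
  ultimately show thesis
    using that \<psi> \<psi>f by (simp add: fk_epi_def)
qed

section \<open>Fibre products\<close>

definition fibre_product :: "('a, 'm) monoid_scheme \<Rightarrow> ('b, 'n) monoid_scheme
    \<Rightarrow> ('a \<Rightarrow> 'c) \<Rightarrow> ('b \<Rightarrow> 'c) \<Rightarrow> ('a \<times> 'b) monoid" where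
  "fibre_product A B f g = (A \<times>\<times> B)\<lparr>carrier := {(a, b) \<in> carrier A \<times> carrier B. f a = g b}\<rparr>"

lemma carrier_fibre_product [simp]:
  "carrier (fibre_product A B f g) = {(a, b) \<in> carrier A \<times> carrier B. f a = g b}"
  by (simp add: fibre_product_def)

lemma mult_fibre_product [simp]:
  "x \<otimes>\<^bsub>fibre_product A B f g\<^esub> y = (fst x \<otimes>\<^bsub>A\<^esub> fst y, snd x \<otimes>\<^bsub>B\<^esub> snd y)"
  by (simp add: fibre_product_def mult_DirProd')

locale compact_fibre_product =
  fixes A :: "'a monoid" and TA :: "'a topology" and B :: "'b monoid" and TB :: "'b topology"
    and C :: "'c monoid" and TC :: "'c topology" and f :: "'a \<Rightarrow> 'c" and g :: "'b \<Rightarrow> 'c"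
  assumes A: "compact_group A TA" and B: "compact_group B TB" and C: "compact_group C TC"
    and f: "f \<in> hom A C" "continuous_map TA TC f"
    and g: "g \<in> hom B C" "continuous_map TB TC g"
begin

abbreviation "D \<equiv> fibre_product A B f g"
abbreviation "TD \<equiv> subtopology (prod_topology TA TB) (carrier D)"

sublocale A: group A by (rule compact_groupD(1)[OF A])
sublocale B: group B by (rule compact_groupD(1)[OF B])
sublocale f: group_hom A C f
  using f(1) compact_groupD(1)[OF C] by (simp add: group_hom_def group_hom_axioms_def)
sublocale g: group_hom B C g
  using g(1) compact_groupD(1)[OF C] by (simp add: group_hom_def group_hom_axioms_def)

lemma subgroup_fibre_product: "subgroup (carrier D) (A \<times>\<times> B)"
proof (rule group.subgroupI[OF DirProd_group[OF A.is_group B.is_group]])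
  show "carrier D \<subseteq> carrier (A \<times>\<times> B)" "carrier D \<noteq> {}"
    by auto (use A.one_closed B.one_closed in force)
  show "inv\<^bsub>A \<times>\<times> B\<^esub> z \<in> carrier D" if "z \<in> carrier D" for z
    using that by (auto simp: f.hom_inv g.hom_inv)
  show "z \<otimes>\<^bsub>A \<times>\<times> B\<^esub> w \<in> carrier D" if "z \<in> carrier D" "w \<in> carrier D" for z w
    using that by auto
qed

lemma group_fibre_product: "group D"
proof -
  have "group ((A \<times>\<times> B)\<lparr>carrier := carrier D\<rparr>)"
    by (rule subgroup.subgroup_is_group[OF subgroup_fibre_product DirProd_group[OF A.is_group B.is_group]])
  then show ?thesis
    by (simp add: fibre_product_def)
qed

sublocale D: group D
  by (rule group_fibre_product)

lemma inv_fibre_product: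
  assumes "z \<in> carrier D"
  shows "inv\<^bsub>D\<^esub> z = (inv\<^bsub>A\<^esub> fst z, inv\<^bsub>B\<^esub> snd z)"
  using group.m_inv_consistent[OF DirProd_group[OF A.is_group B.is_group] subgroup_fibre_product assms]
    assms by (auto simp: fibre_product_def)

lemma topspace_fibre_product: "topspace TD = carrier D"
  using compact_groupD(2)[OF A] compact_groupD(2)[OF B] by auto

lemma closedin_fibre_product: "closedin (prod_topology TA TB) (carrier D)"
proof -
  have "closedin (prod_topology TA TB) {z \<in> topspace (prod_topology TA TB). (f \<circ> fst) z = (g \<circ> snd) z}"
    by (rule closedin_continuous_maps_eq[OF compact_groupD(6)[OF C]
          continuous_map_compose[OF continuous_map_fst f(2)] continuous_map_compose[OF continuous_map_snd g(2)]])
  moreover have "{z \<in> topspace (prod_topology TA TB). (f \<circ> fst) z = (g \<circ> snd) z} = carrier D"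
    using compact_groupD(2)[OF A] compact_groupD(2)[OF B] by auto
  ultimately show ?thesis
    by metis
qed

lemma compact_group_fibre_product: "compact_group D TD"
proof -
  have fst: "continuous_map TD TA fst" and snd: "continuous_map TD TB snd"
    by (simp_all add: continuous_map_from_subtopology continuous_map_fst continuous_map_snd)
  have "continuous_map (prod_topology TD TD) (prod_topology TA TB)
      (\<lambda>(x, y). (fst x \<otimes>\<^bsub>A\<^esub> fst y, snd x \<otimes>\<^bsub>B\<^esub> snd y))"
    unfolding case_prod_unfold
    by (intro continuous_map_pairedI continuous_map_group_mult[OF A] continuous_map_group_mult[OF B]
        continuous_map_compose[OF continuous_map_fst fst, unfolded o_def]
        continuous_map_compose[OF continuous_map_snd fst, unfolded o_def]
        continuous_map_compose[OF continuous_map_fst snd, unfolded o_def]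
        continuous_map_compose[OF continuous_map_snd snd, unfolded o_def])
  then have "continuous_map (prod_topology TD TD) TD (\<lambda>(x, y). x \<otimes>\<^bsub>D\<^esub> y)"
    using D.m_closed by (auto simp: continuous_map_in_subtopology topspace_fibre_product case_prod_unfold)
  moreover have "continuous_map TD (prod_topology TA TB) (\<lambda>z. (inv\<^bsub>A\<^esub> fst z, inv\<^bsub>B\<^esub> snd z))"
    by (intro continuous_map_pairedI continuous_map_group_inv[OF A fst] continuous_map_group_inv[OF B snd])
  then have "continuous_map TD TD (m_inv D)"
    using D.inv_closed
    by (auto simp: continuous_map_in_subtopology topspace_fibre_product inv_fibre_product
        intro: continuous_map_eq)
  moreover have "compact_space TD"
    using closedin_compact_space[OF _ closedin_fibre_product] compact_groupD(5)[OF A] compact_groupD(5)[OF B]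
    by (simp add: compact_space_subtopology compact_space_prod_topology)
  moreover have "Hausdorff_space TD"
    using compact_groupD(6)[OF A] compact_groupD(6)[OF B]
    by (simp add: Hausdorff_space_subtopology Hausdorff_space_prod_topology)
  ultimately show ?thesis
    using group_fibre_product topspace_fibre_product by (simp add: compact_group_def)
qed

lemma fk_epi_fst_fibre_product:
  assumes "f ` carrier A \<subseteq> g ` carrier B" "finite (kernel B C g)"
  shows "fk_epi D TD A TA fst"
proof -
  have "fst ` carrier D = carrier A"
    using assms(1) by force
  moreover have "kernel D A fst \<subseteq> {\<one>\<^bsub>A\<^esub>} \<times> kernel B C g"
    by (auto simp: kernel_def)
  then have "finite (kernel D A fst)"
    using assms(2) finite_subset by auto
  ultimately show ?thesis
    by (auto simp: fk_epi_def hom_def continuous_map_from_subtopology continuous_map_fst)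
qed

lemma fk_epi_snd_fibre_product:
  assumes "g ` carrier B \<subseteq> f ` carrier A" "finite (kernel A C f)"
  shows "fk_epi D TD B TB snd"
proof -
  have "snd ` carrier D = carrier B"
    using assms(1) by force
  moreover have "kernel D B snd \<subseteq> kernel A C f \<times> {\<one>\<^bsub>B\<^esub>}"
    by (auto simp: kernel_def)
  then have "finite (kernel D B snd)"
    using assms(2) finite_subset by auto
  ultimately show ?thesis
    by (auto simp: fk_epi_def hom_def continuous_map_from_subtopology continuous_map_snd)
qed

lemma bij_betw_map_prod_fibre_product:
  assumes \<alpha>: "bij_betw \<alpha> (carrier A) (carrier A)" and \<beta>: "bij_betw \<beta> (carrier B) (carrier B)"
    and \<gamma>: "inj_on \<gamma> (carrier C)"
    and f\<alpha>: "\<And>a. a \<in> carrier A \<Longrightarrow> f (\<alpha> a) = \<gamma> (f a)"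
    and g\<beta>: "\<And>b. b \<in> carrier B \<Longrightarrow> g (\<beta> b) = \<gamma> (g b)"
  shows "bij_betw (map_prod \<alpha> \<beta>) (carrier D) (carrier D)"
proof -
  have "map_prod \<alpha> \<beta> z \<in> carrier D" if z: "z \<in> carrier D" for z
  proof -
    obtain a b where ab: "z = (a, b)" "a \<in> carrier A" "b \<in> carrier B" "f a = g b"
      using z by auto
    moreover have "\<alpha> a \<in> carrier A" "\<beta> b \<in> carrier B"
      using bij_betw_apply[OF \<alpha> ab(2)] bij_betw_apply[OF \<beta> ab(3)] .
    ultimately show ?thesis
      using f\<alpha> g\<beta> by simp
  qed
  then have "map_prod \<alpha> \<beta> ` carrier D \<subseteq> carrier D"
    by (rule image_subsetI)
  moreover have "carrier D \<subseteq> map_prod \<alpha> \<beta> ` carrier D"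
  proof
    fix z assume "z \<in> carrier D"
    then obtain a b where ab: "z = (a, b)" "a \<in> carrier A" "b \<in> carrier B" "f a = g b"
      by auto
    obtain a' b' where a': "a' \<in> carrier A" "a = \<alpha> a'" and b': "b' \<in> carrier B" "b = \<beta> b'"
      using ab(2,3) \<alpha> \<beta> by (metis bij_betw_imp_surj_on imageE)
    have "\<gamma> (f a') = \<gamma> (g b')"
      using ab(4) a' b' f\<alpha> g\<beta> by simp
    then have "f a' = g b'"
      using \<gamma> a'(1) b'(1) f.hom_closed g.hom_closed by (auto dest: inj_onD)
    then show "z \<in> map_prod \<alpha> \<beta> ` carrier D"
      using ab(1) a' b' by force
  qed
  moreover have "inj_on (map_prod \<alpha> \<beta>) (carrier D)"
    using map_prod_inj_on[OF bij_betw_imp_inj_on[OF \<alpha>] bij_betw_imp_inj_on[OF \<beta>]]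
    by (rule inj_on_subset) auto
  ultimately show ?thesis
    by (auto simp: bij_betw_def)
qed

lemma top_group_aut_fibre_product:
  assumes \<alpha>: "top_group_aut A TA \<alpha>" and \<beta>: "top_group_aut B TB \<beta>" and \<gamma>: "inj_on \<gamma> (carrier C)"
    and f\<alpha>: "\<And>a. a \<in> carrier A \<Longrightarrow> f (\<alpha> a) = \<gamma> (f a)"
    and g\<beta>: "\<And>b. b \<in> carrier B \<Longrightarrow> g (\<beta> b) = \<gamma> (g b)"
  shows "top_group_aut D TD (map_prod \<alpha> \<beta>)"
proof (rule top_group_autI[OF compact_group_fibre_product])
  have hom: "\<alpha> \<in> hom A A" "\<beta> \<in> hom B B"
    and bij: "bij_betw \<alpha> (carrier A) (carrier A)" "bij_betw \<beta> (carrier B) (carrier B)"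
    and cont: "continuous_map TA TA \<alpha>" "continuous_map TB TB \<beta>"
    using \<alpha> \<beta> by (auto simp: top_group_aut_def iso_def homeomorphic_imp_continuous_map)
  show bij_D: "bij_betw (map_prod \<alpha> \<beta>) (carrier D) (carrier D)"
    by (rule bij_betw_map_prod_fibre_product[OF bij \<gamma> f\<alpha> g\<beta>])
  have into: "map_prod \<alpha> \<beta> z \<in> carrier D" if "z \<in> carrier D" for z
    by (rule bij_betw_apply[OF bij_D that])
  show "map_prod \<alpha> \<beta> \<in> hom D D"
  proof (rule homI)
    fix z w assume "z \<in> carrier D" "w \<in> carrier D"
    then show "map_prod \<alpha> \<beta> (z \<otimes>\<^bsub>D\<^esub> w) = map_prod \<alpha> \<beta> z \<otimes>\<^bsub>D\<^esub> map_prod \<alpha> \<beta> w"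
      using hom_mult[OF hom(1)] hom_mult[OF hom(2)] by (auto simp: map_prod_def case_prod_unfold)
  qed (rule into)
  have "continuous_map TD (prod_topology TA TB) (\<lambda>z. (\<alpha> (fst z), \<beta> (snd z)))"
    by (intro continuous_map_pairedI
        continuous_map_compose[OF continuous_map_from_subtopology[OF continuous_map_fst] cont(1), unfolded o_def]
        continuous_map_compose[OF continuous_map_from_subtopology[OF continuous_map_snd] cont(2), unfolded o_def])
  then show "continuous_map TD TD (map_prod \<alpha> \<beta>)"
    using into by (simp add: continuous_map_in_subtopology topspace_fibre_product map_prod_def case_prod_unfold)
qed

end

section \<open>Quotients by finite normal subgroups\<close>

definition quotient_topology :: "'a topology \<Rightarrow> ('a \<Rightarrow> 'b) \<Rightarrow> 'b set \<Rightarrow> 'b topology" where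
  "quotient_topology T q S = topology (\<lambda>U. U \<subseteq> S \<and> openin T {x \<in> topspace T. q x \<in> U})"

lemma
  assumes "q ` topspace T = S"
  shows topspace_quotient_topology: "topspace (quotient_topology T q S) = S"
    and quotient_map_quotient_topology: "quotient_map T (quotient_topology T q S) q"
proof -
  have "istopology (\<lambda>U. U \<subseteq> S \<and> openin T {x \<in> topspace T. q x \<in> U})"
    unfolding istopology_def
  proof (rule conjI; intro allI impI)
    fix U V
    assume "U \<subseteq> S \<and> openin T {x \<in> topspace T. q x \<in> U}" "V \<subseteq> S \<and> openin T {x \<in> topspace T. q x \<in> V}"
    moreover have "{x \<in> topspace T. q x \<in> U \<inter> V} = {x \<in> topspace T. q x \<in> U} \<inter> {x \<in> topspace T. q x \<in> V}"
      by auto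
    ultimately show "U \<inter> V \<subseteq> S \<and> openin T {x \<in> topspace T. q x \<in> U \<inter> V}"
      by auto
  next
    fix \<U> assume \<U>: "\<forall>U\<in>\<U>. U \<subseteq> S \<and> openin T {x \<in> topspace T. q x \<in> U}"
    have "{x \<in> topspace T. q x \<in> \<Union>\<U>} = (\<Union>U\<in>\<U>. {x \<in> topspace T. q x \<in> U})"
      by auto
    then show "\<Union>\<U> \<subseteq> S \<and> openin T {x \<in> topspace T. q x \<in> \<Union>\<U>}"
      using \<U> by auto
  qed
  then have openin: "openin (quotient_topology T q S) U \<longleftrightarrow> U \<subseteq> S \<and> openin T {x \<in> topspace T. q x \<in> U}"
    for U by (simp add: quotient_topology_def)
  have "{x \<in> topspace T. q x \<in> S} = topspace T"
    using assms by auto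
  then have "openin (quotient_topology T q S) S"
    by (simp add: openin)
  then show topspace: "topspace (quotient_topology T q S) = S"
    using openin[of "topspace (quotient_topology T q S)"] openin_subset by blast
  show "quotient_map T (quotient_topology T q S) q"
    using assms unfolding quotient_map_def topspace openin by auto
qed

lemma compact_group_hom_image:
  assumes G: "compact_group G T" and "group L" and h: "h \<in> hom G L" "h ` carrier G = carrier L"
    and "continuous_map T S h" "topspace S = carrier L" "Hausdorff_space S"
  shows "compact_group L S"
proof -
  note G' = compact_groupD[OF G]
  have surj: "h ` topspace T = topspace S"
    using assms G'(2) by simp
  have quot: "quotient_map T S h"
    by (rule continuous_imp_quotient_map[OF assms(5) G'(5) assms(7) surj])
  have "quotient_map (prod_topology T T) (prod_topology S S) (\<lambda>(x, y). (h x, h y))"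
    using assms G' surj
    by (intro continuous_imp_quotient_map)
      (simp_all add: continuous_map_prod_top compact_space_prod_topology
        Hausdorff_space_prod_topology image_paired_Times)
  moreover have "continuous_map (prod_topology T T) S ((\<lambda>(x, y). x \<otimes>\<^bsub>L\<^esub> y) \<circ> (\<lambda>(x, y). (h x, h y)))"
    by (rule continuous_map_eq[OF continuous_map_compose[OF G'(3) assms(5)]])
      (auto simp: G'(2) hom_mult[OF h(1)])
  ultimately have "continuous_map (prod_topology S S) S (\<lambda>(x, y). x \<otimes>\<^bsub>L\<^esub> y)"
    by (rule continuous_compose_quotient_map)
  moreover have "continuous_map T S (m_inv L \<circ> h)"
    using group_hom.hom_inv[of G L h] assms G'(1) G'(2)
    by (intro continuous_map_eq[OF continuous_map_compose[OF G'(4) assms(5)]])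
      (auto simp: group_hom_def group_hom_axioms_def)
  then have "continuous_map S S (m_inv L)"
    by (rule continuous_compose_quotient_map[OF quot])
  moreover have "compact_space S"
    using image_compactin[OF G'(5)[unfolded compact_space_def] assms(5)] surj
    by (simp add: compact_space_def)
  ultimately show ?thesis
    using assms by (simp add: compact_group_def)
qed

definition quotient_group_topology :: "'a topology \<Rightarrow> ('a, 'm) monoid_scheme \<Rightarrow> 'a set \<Rightarrow> 'a set topology"
  where "quotient_group_topology T G N = quotient_topology T (r_coset G N) (carrier (G Mod N))"

locale compact_finite_quotient = normal N G for N and G :: "'a monoid" (structure) +
  fixes T :: "'a topology"
  assumes compact_group: "compact_group G T" and finite_subgroup: "finite N"
begin

lemma image_rcoset_topspace: "(\<lambda>x. N #> x) ` topspace T = carrier (G Mod N)"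
  using compact_groupD(2)[OF compact_group] by (simp add: carrier_FactGroup)

lemma topspace_quotient_group_topology: "topspace (quotient_group_topology T G N) = carrier (G Mod N)"
  unfolding quotient_group_topology_def by (rule topspace_quotient_topology[OF image_rcoset_topspace])

lemma quotient_map_rcoset: "quotient_map T (quotient_group_topology T G N) (\<lambda>x. N #> x)"
  unfolding quotient_group_topology_def by (rule quotient_map_quotient_topology[OF image_rcoset_topspace])

lemma rcoset_eq_iff:
  assumes "x \<in> carrier G" "c \<in> carrier G"
  shows "N #> x = N #> c \<longleftrightarrow> (\<exists>n\<in>N. x = n \<otimes> c)"
proof -
  have "N #> x = N #> c \<longleftrightarrow> x \<in> N #> c"
    using assms rcos_self[OF assms(1) subgroup_axioms] repr_independence[OF _ assms(2) subgroup_axioms]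
    by metis
  then show ?thesis
    by (auto simp: r_coset_def)
qed

lemma rcoset_saturation:
  assumes "C \<subseteq> carrier G"
  shows "{x \<in> carrier G. N #> x \<in> (\<lambda>c. N #> c) ` C} = (\<Union>n\<in>N. (\<lambda>x. n \<otimes> x) ` C)"
proof (intro equalityI subsetI)
  fix x assume "x \<in> {x \<in> carrier G. N #> x \<in> (\<lambda>c. N #> c) ` C}"
  then obtain c where "x \<in> carrier G" "c \<in> C" "N #> x = N #> c"
    by auto
  then show "x \<in> (\<Union>n\<in>N. (\<lambda>x. n \<otimes> x) ` C)"
    using rcoset_eq_iff assms by blast
next
  fix x assume "x \<in> (\<Union>n\<in>N. (\<lambda>x. n \<otimes> x) ` C)"
  then obtain n c where nc: "n \<in> N" "c \<in> C" "x = n \<otimes> c"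
    by blast
  then have "x \<in> carrier G" "c \<in> carrier G"
    using assms subset by auto
  then show "x \<in> {x \<in> carrier G. N #> x \<in> (\<lambda>c. N #> c) ` C}"
    using rcoset_eq_iff nc by blast
qed

lemma closed_map_rcoset: "closed_map T (quotient_group_topology T G N) (\<lambda>x. N #> x)"
  unfolding closed_map_def
proof (intro allI impI)
  fix C assume C: "closedin T C"
  then have sub: "C \<subseteq> carrier G"
    using closedin_subset compact_groupD(2)[OF compact_group] by auto
  have "closedin T (\<Union>n\<in>N. (\<lambda>x. n \<otimes> x) ` C)"
    using finite_subgroup C subset homeomorphic_map_left_translation[OF compact_group]
    by (intro closedin_Union) (auto intro: homeomorphic_imp_closed_map[unfolded closed_map_def, rule_format])
  then have "closedin T {x \<in> topspace T. N #> x \<in> (\<lambda>c. N #> c) ` C}"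
    using rcoset_saturation[OF sub] compact_groupD(2)[OF compact_group] by simp
  moreover have "(\<lambda>c. N #> c) ` C \<subseteq> topspace (quotient_group_topology T G N)"
    using sub topspace_quotient_group_topology by (auto simp: carrier_FactGroup)
  ultimately show "closedin (quotient_group_topology T G N) ((\<lambda>c. N #> c) ` C)"
    using quotient_map_rcoset unfolding quotient_map_closedin by auto
qed

lemma Hausdorff_quotient_group_topology: "Hausdorff_space (quotient_group_topology T G N)"
  using normal_Hausdorff_space_closed_continuous_map_image[OF
      compact_Hausdorff_or_regular_imp_normal_space[OF compact_groupD(5)[OF compact_group]]
      compact_groupD(6)[OF compact_group] closed_map_rcoset
      quotient_imp_continuous_map[OF quotient_map_rcoset]]
    image_rcoset_topspace topspace_quotient_group_topology compact_groupD(6)[OF compact_group]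
  by simp

lemma compact_group_Mod: "compact_group (G Mod N) (quotient_group_topology T G N)"
  by (rule compact_group_hom_image[OF compact_group factorgroup_is_group r_coset_hom_Mod])
    (simp_all add: carrier_FactGroup quotient_imp_continuous_map[OF quotient_map_rcoset] topspace_quotient_group_topology Hausdorff_quotient_group_topology)

lemma fk_epi_rcoset: "fk_epi G T (G Mod N) (quotient_group_topology T G N) (\<lambda>x. N #> x)"
proof -
  have "kernel G (G Mod N) (\<lambda>x. N #> x) \<subseteq> N"
    using coset_join1[OF _ _ subgroup_axioms] by (auto simp: kernel_def)
  then show ?thesis
    using r_coset_hom_Mod quotient_imp_continuous_map[OF quotient_map_rcoset] finite_subset finite_subgroup
    by (simp add: fk_epi_def carrier_FactGroup)
qed

lemma image_subgroup_iso:
  assumes "\<alpha> \<in> iso G G" "\<alpha> ` N \<subseteq> N"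
  shows "\<alpha> ` N = N"
proof (rule card_subset_eq[OF finite_subgroup assms(2)])
  show "card (\<alpha> ` N) = card N"
    using assms(1) subset by (intro card_image) (auto simp: iso_def bij_betw_def intro: inj_on_subset)
qed

lemma image_rcoset_iso:
  assumes "\<alpha> \<in> iso G G" "\<alpha> ` N \<subseteq> N" "x \<in> carrier G"
  shows "\<alpha> ` (N #> x) = N #> \<alpha> x"
proof -
  have rcoset: "N #> y = (\<lambda>n. n \<otimes> y) ` N" for y
    by (auto simp: r_coset_def)
  have hom: "\<alpha> \<in> hom G G"
    using assms(1) by (simp add: iso_def)
  have "\<alpha> ` (N #> x) = (\<lambda>n. \<alpha> (n \<otimes> x)) ` N"
    by (simp add: rcoset image_image)
  also have "\<dots> = (\<lambda>n. \<alpha> n \<otimes> \<alpha> x) ` N"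
    using assms(3) subset hom_mult[OF hom] by (intro image_cong) auto
  also have "\<dots> = (\<lambda>n. n \<otimes> \<alpha> x) ` (\<alpha> ` N)"
    by (simp add: image_image)
  also have "\<dots> = N #> \<alpha> x"
    by (simp add: image_subgroup_iso[OF assms(1,2)] rcoset)
  finally show ?thesis .
qed

lemma top_group_aut_Mod:
  assumes \<alpha>: "top_group_aut G T \<alpha>" and inv: "\<alpha> ` N \<subseteq> N"
  shows "top_group_aut (G Mod N) (quotient_group_topology T G N) (\<lambda>U. \<alpha> ` U)"
proof (rule top_group_autI[OF compact_group_Mod])
  have iso: "\<alpha> \<in> iso G G" and cont: "continuous_map T T \<alpha>"
    using \<alpha> by (auto simp: top_group_aut_def homeomorphic_imp_continuous_map)
  then have hom: "\<alpha> \<in> hom G G" and closed: "\<alpha> x \<in> carrier G" and surj: "\<alpha> ` carrier G = carrier G"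
    and inj: "inj_on \<alpha> (carrier G)" if "x \<in> carrier G" for x
    using that by (auto simp: iso_def bij_betw_def hom_in_carrier)
  note image_rcoset = image_rcoset_iso[OF iso inv]
  show "(\<lambda>U. \<alpha> ` U) \<in> hom (G Mod N) (G Mod N)"
  proof (rule homI)
    fix U assume "U \<in> carrier (G Mod N)"
    then show "\<alpha> ` U \<in> carrier (G Mod N)"
      using image_rcoset closed by (auto simp: carrier_FactGroup)
  next
    fix U V assume "U \<in> carrier (G Mod N)" "V \<in> carrier (G Mod N)"
    then obtain x y where "x \<in> carrier G" "U = N #> x" "y \<in> carrier G" "V = N #> y"
      by (auto simp: carrier_FactGroup)
    then show "\<alpha> ` (U \<otimes>\<^bsub>G Mod N\<^esub> V) = \<alpha> ` U \<otimes>\<^bsub>G Mod N\<^esub> \<alpha> ` V"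
      using closed by (simp add: rcos_sum image_rcoset hom_mult[OF hom])
  qed
  have "inj_on (\<lambda>U. \<alpha> ` U) (carrier (G Mod N))"
    using inj inj_on_image_eq_iff[OF inj]
    by (intro inj_onI) (auto simp: carrier_FactGroup r_coset_subset_G[OF subset])
  moreover have "(\<lambda>U. \<alpha> ` U) ` carrier (G Mod N) = carrier (G Mod N)"
    unfolding carrier_FactGroup image_image using image_rcoset surj
    by (metis (no_types, lifting) image_cong image_image)
  ultimately show "bij_betw (\<lambda>U. \<alpha> ` U) (carrier (G Mod N)) (carrier (G Mod N))"
    by (simp add: bij_betw_def)
  have "continuous_map T (quotient_group_topology T G N) ((\<lambda>x. N #> x) \<circ> \<alpha>)"
    by (rule continuous_map_compose[OF cont quotient_imp_continuous_map[OF quotient_map_rcoset]])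
  then have "continuous_map T (quotient_group_topology T G N) ((\<lambda>U. \<alpha> ` U) \<circ> (\<lambda>x. N #> x))"
    by (rule continuous_map_eq) (simp add: compact_groupD(2)[OF compact_group] image_rcoset)
  then show "continuous_map (quotient_group_topology T G N) (quotient_group_topology T G N) (\<lambda>U. \<alpha> ` U)"
    by (rule continuous_compose_quotient_map[OF quotient_map_rcoset])
qed

end

section \<open>Co-commensurability\<close>

lemma cocomm_via_fibre_product:
  fixes A :: "'a monoid" and B :: "'b monoid"
  assumes "cpair A TA \<alpha>" "cpair B TB \<beta>" "cpair C TC \<gamma>"
    and f_epi: "fk_epi A TA C TC f" and g_epi: "fk_epi B TB C TC g"
    and "\<forall>a\<in>carrier A. f (\<alpha> a) = \<gamma> (f a)" "\<forall>b\<in>carrier B. g (\<beta> b) = \<gamma> (g b)"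
  shows "cocomm_via TYPE('a \<times> 'b) A TA \<alpha> B TB \<beta>"
proof -
  interpret compact_fibre_product A TA B TB C TC f g
    using assms fk_epiD(1,2)[OF f_epi] fk_epiD(1,2)[OF g_epi]
    by unfold_locales (auto simp: cpair_def)
  have "top_group_aut D TD (map_prod \<alpha> \<beta>)"
    by (rule top_group_aut_fibre_product)
      (use assms in \<open>auto simp: cpair_def top_group_aut_def iso_def bij_betw_def\<close>)
  then have "cpair D TD (map_prod \<alpha> \<beta>)"
    using compact_group_fibre_product by (simp add: cpair_def)
  moreover have "fk_epi D TD A TA fst" "fk_epi D TD B TB snd"
    using fk_epi_fst_fibre_product fk_epi_snd_fibre_product fk_epiD(3,4)[OF f_epi] fk_epiD(3,4)[OF g_epi]
    by simp_all
  moreover have "\<forall>z\<in>carrier D. fst (map_prod \<alpha> \<beta> z) = \<alpha> (fst z)"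
    and "\<forall>z\<in>carrier D. snd (map_prod \<alpha> \<beta> z) = \<beta> (snd z)"
    by simp_all
  ultimately show ?thesis
    unfolding cocomm_via_def by blast
qed

lemma cocomm_via_refl:
  fixes G :: "'a monoid"
  assumes "cpair G T \<alpha>"
  shows "cocomm_via TYPE('a) G T \<alpha> G T \<alpha>"
proof -
  have "fk_epi G T G T (\<lambda>x. x)"
    using assms by (intro fk_epi_id) (simp add: cpair_def compact_group_def)
  then show ?thesis
    unfolding cocomm_via_def using assms
    by (intro exI[of _ G] exI[of _ T] exI[of _ \<alpha>] exI[of _ "\<lambda>x. x"]) simp
qed

lemma cocomm_via_sym:
  assumes "cocomm_via TYPE('c) G1 T1 \<alpha>1 G2 T2 \<alpha>2"
  shows "cocomm_via TYPE('c) G2 T2 \<alpha>2 G1 T1 \<alpha>1"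
  using assms unfolding cocomm_via_def by blast

lemma cocomm_via_fk_epi_image:
  assumes "cocomm_via TYPE('c) A TA \<alpha> B TB \<beta>" "group A" "group B"
    and p: "fk_epi A TA A' TA' p" and r: "fk_epi B TB B' TB' r"
    and "\<forall>x\<in>carrier A. p (\<alpha> x) = \<alpha>' (p x)" "\<forall>x\<in>carrier B. r (\<beta> x) = \<beta>' (r x)"
  shows "cocomm_via TYPE('c) A' TA' \<alpha>' B' TB' \<beta>'"
proof -
  obtain G :: "'c monoid" and T \<delta> \<phi> \<psi> where G: "cpair G T \<delta>"
    and \<phi>: "fk_epi G T A TA \<phi>" and \<psi>: "fk_epi G T B TB \<psi>"
    and \<phi>\<delta>: "\<forall>x\<in>carrier G. \<phi> (\<delta> x) = \<alpha> (\<phi> x)" and \<psi>\<delta>: "\<forall>x\<in>carrier G. \<psi> (\<delta> x) = \<beta> (\<psi> x)"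
    using assms(1) unfolding cocomm_via_def by blast
  have "group G"
    using G by (simp add: cpair_def compact_group_def)
  then have "fk_epi G T A' TA' (p \<circ> \<phi>)" "fk_epi G T B' TB' (r \<circ> \<psi>)"
    using fk_epi_comp assms(2,3) p r \<phi> \<psi> by blast+
  moreover have "\<forall>x\<in>carrier G. (p \<circ> \<phi>) (\<delta> x) = \<alpha>' ((p \<circ> \<phi>) x)"
    using \<phi>\<delta> assms(6) hom_in_carrier[OF fk_epiD(1)[OF \<phi>]] by simp
  moreover have "\<forall>x\<in>carrier G. (r \<circ> \<psi>) (\<delta> x) = \<beta>' ((r \<circ> \<psi>) x)"
    using \<psi>\<delta> assms(7) hom_in_carrier[OF fk_epiD(1)[OF \<psi>]] by simp
  ultimately show ?thesis
    unfolding cocomm_via_def using G by blast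
qed

lemma cocomm_via_trans:
  fixes G1 :: "'a monoid" and G2 :: "'b monoid" and G3 :: "'e monoid"
  assumes "cpair G1 T1 \<alpha>1" "cpair G2 T2 \<alpha>2" "cpair G3 T3 \<alpha>3"
    and "cocomm_via TYPE('c) G1 T1 \<alpha>1 G2 T2 \<alpha>2" "cocomm_via TYPE('d) G2 T2 \<alpha>2 G3 T3 \<alpha>3"
  shows "cocomm_via TYPE('c \<times> 'd) G1 T1 \<alpha>1 G3 T3 \<alpha>3"
proof -
  obtain G :: "'c monoid" and T \<alpha> \<phi>1 \<phi>2 where G: "cpair G T \<alpha>"
    and \<phi>: "fk_epi G T G1 T1 \<phi>1" "fk_epi G T G2 T2 \<phi>2"
    and \<phi>\<alpha>: "\<forall>x\<in>carrier G. \<phi>1 (\<alpha> x) = \<alpha>1 (\<phi>1 x)" "\<forall>x\<in>carrier G. \<phi>2 (\<alpha> x) = \<alpha>2 (\<phi>2 x)"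
    using assms(4) unfolding cocomm_via_def by blast
  obtain H :: "'d monoid" and S \<beta> \<psi>2 \<psi>3 where H: "cpair H S \<beta>"
    and \<psi>: "fk_epi H S G2 T2 \<psi>2" "fk_epi H S G3 T3 \<psi>3"
    and \<psi>\<beta>: "\<forall>x\<in>carrier H. \<psi>2 (\<beta> x) = \<alpha>2 (\<psi>2 x)" "\<forall>x\<in>carrier H. \<psi>3 (\<beta> x) = \<alpha>3 (\<psi>3 x)"
    using assms(5) unfolding cocomm_via_def by blast
  have "cocomm_via TYPE('c \<times> 'd) G T \<alpha> H S \<beta>"
    by (rule cocomm_via_fibre_product[OF G H assms(2) \<phi>(2) \<psi>(1) \<phi>\<alpha>(2) \<psi>\<beta>(1)])
  moreover have "group G" "group H"
    using G H by (simp_all add: cpair_def compact_group_def)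
  ultimately show ?thesis
    by (rule cocomm_via_fk_epi_image[OF _ _ _ \<phi>(1) \<psi>(2) \<phi>\<alpha>(1) \<psi>\<beta>(2)])
qed

lemma cocodom_via_imp_cocomm_via:
  fixes G1 :: "'a monoid" and G2 :: "'b monoid"
  assumes "cpair G1 T1 \<alpha>1" "cpair G2 T2 \<alpha>2" "cocodom_via TYPE('l) G1 T1 \<alpha>1 G2 T2 \<alpha>2"
  shows "cocomm_via TYPE('a \<times> 'b) G1 T1 \<alpha>1 G2 T2 \<alpha>2"
proof -
  obtain L :: "'l monoid" and S \<gamma> \<psi>1 \<psi>2 where "cpair L S \<gamma>"
    and "fk_epi G1 T1 L S \<psi>1" "fk_epi G2 T2 L S \<psi>2"
    and "\<forall>x\<in>carrier G1. \<gamma> (\<psi>1 x) = \<psi>1 (\<alpha>1 x)" "\<forall>x\<in>carrier G2. \<gamma> (\<psi>2 x) = \<psi>2 (\<alpha>2 x)"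
    using assms(3) unfolding cocodom_via_def by blast
  moreover from this have "\<forall>x\<in>carrier G1. \<psi>1 (\<alpha>1 x) = \<gamma> (\<psi>1 x)" "\<forall>x\<in>carrier G2. \<psi>2 (\<alpha>2 x) = \<gamma> (\<psi>2 x)"
    by simp_all
  ultimately show ?thesis
    using cocomm_via_fibre_product[OF assms(1,2)] by blast
qed

lemma intertwining_factor:
  assumes "\<phi> ` carrier G = carrier H" "\<And>x. x \<in> carrier G \<Longrightarrow> \<alpha> x \<in> carrier G"
    and "\<And>x. x \<in> carrier G \<Longrightarrow> \<phi> (\<alpha> x) = \<beta> (\<phi> x)" "\<And>x. x \<in> carrier G \<Longrightarrow> \<psi> (\<phi> x) = h x"
    and "\<And>x. x \<in> carrier G \<Longrightarrow> h (\<alpha> x) = \<gamma> (h x)"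
  shows "\<forall>y\<in>carrier H. \<gamma> (\<psi> y) = \<psi> (\<beta> y)"
proof
  fix y assume "y \<in> carrier H"
  then obtain x where "x \<in> carrier G" "y = \<phi> x"
    using assms(1) by blast
  then have "\<psi> (\<beta> y) = \<psi> (\<phi> (\<alpha> x))"
    using assms(3) by simp
  also have "\<dots> = \<gamma> (h x)"
    using \<open>x \<in> carrier G\<close> assms(2,4,5) by simp
  also have "\<dots> = \<gamma> (\<psi> y)"
    using \<open>x \<in> carrier G\<close> \<open>y = \<phi> x\<close> assms(4) by simp
  finally show "\<gamma> (\<psi> y) = \<psi> (\<beta> y)" ..
qed

lemma cocodom_via_FactGroup:
  fixes G1 :: "'a monoid"
  assumes G: "cpair G T \<alpha>" and c1: "cpair G1 T1 \<alpha>1" and c2: "cpair G2 T2 \<alpha>2"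
    and \<phi>1: "fk_epi G T G1 T1 \<phi>1" and \<phi>2: "fk_epi G T G2 T2 \<phi>2"
    and \<phi>1\<alpha>: "\<forall>x\<in>carrier G. \<phi>1 (\<alpha> x) = \<alpha>1 (\<phi>1 x)"
    and \<phi>2\<alpha>: "\<forall>x\<in>carrier G. \<phi>2 (\<alpha> x) = \<alpha>2 (\<phi>2 x)"
    and N: "compact_finite_quotient N G1 T1" and inv: "\<alpha>1 ` N \<subseteq> N"
    and ker: "\<phi>1 ` kernel G G2 \<phi>2 \<subseteq> N"
  shows "cocodom_via TYPE('a set) G1 T1 \<alpha>1 G2 T2 \<alpha>2"
proof -
  interpret Q: compact_finite_quotient N G1 T1
    by (fact N)
  have groups: "group G" "group G1"
    using G c1 by (simp_all add: cpair_def compact_group_def)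
  have aut: "top_group_aut (G1 Mod N) (quotient_group_topology T1 G1 N) (\<lambda>U. \<alpha>1 ` U)"
    and image_rcoset: "\<forall>x\<in>carrier G1. \<alpha>1 ` (N #>\<^bsub>G1\<^esub> x) = N #>\<^bsub>G1\<^esub> \<alpha>1 x"
    using c1 Q.top_group_aut_Mod[OF _ inv] Q.image_rcoset_iso[OF _ inv]
    by (auto simp: cpair_def top_group_aut_def)
  have q\<phi>1: "fk_epi G T (G1 Mod N) (quotient_group_topology T1 G1 N) ((\<lambda>x. N #>\<^bsub>G1\<^esub> x) \<circ> \<phi>1)"
    by (rule fk_epi_comp[OF groups \<phi>1 Q.fk_epi_rcoset])
  have "kernel G G2 \<phi>2 \<subseteq> kernel G (G1 Mod N) ((\<lambda>x. N #>\<^bsub>G1\<^esub> x) \<circ> \<phi>1)"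
    using ker Q.rcos_const[OF groups(2)] by (auto simp: kernel_def)
  moreover have "compact_group G T" "compact_group G2 T2"
    using G c2 by (simp_all add: cpair_def)
  ultimately obtain \<psi>2 where \<psi>2: "fk_epi G2 T2 (G1 Mod N) (quotient_group_topology T1 G1 N) \<psi>2"
    and \<psi>2\<phi>2: "\<And>x. x \<in> carrier G \<Longrightarrow> \<psi>2 (\<phi>2 x) = ((\<lambda>x. N #>\<^bsub>G1\<^esub> x) \<circ> \<phi>1) x"
    using fk_epi_factors_through[OF _ _ Q.factorgroup_is_group \<phi>2 q\<phi>1] by blast
  have "\<forall>y\<in>carrier G2. \<alpha>1 ` \<psi>2 y = \<psi>2 (\<alpha>2 y)"
  proof (rule intertwining_factor[where \<gamma> = "\<lambda>U. \<alpha>1 ` U" and \<psi> = \<psi>2 and \<beta> = \<alpha>2 and \<alpha> = \<alpha>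
        and h = "(\<lambda>x. N #>\<^bsub>G1\<^esub> x) \<circ> \<phi>1"])
    show "\<phi>2 ` carrier G = carrier G2"
      by (rule fk_epiD(3)[OF \<phi>2])
    show "\<alpha> x \<in> carrier G" if "x \<in> carrier G" for x
      using G that by (auto simp: cpair_def top_group_aut_def iso_def hom_in_carrier)
    show "\<phi>2 (\<alpha> x) = \<alpha>2 (\<phi>2 x)" if "x \<in> carrier G" for x
      using that \<phi>2\<alpha> by simp
    show "\<psi>2 (\<phi>2 x) = ((\<lambda>x. N #>\<^bsub>G1\<^esub> x) \<circ> \<phi>1) x" if "x \<in> carrier G" for x
      by (rule \<psi>2\<phi>2[OF that])
    show "((\<lambda>x. N #>\<^bsub>G1\<^esub> x) \<circ> \<phi>1) (\<alpha> x) = \<alpha>1 ` ((\<lambda>x. N #>\<^bsub>G1\<^esub> x) \<circ> \<phi>1) x"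
      if "x \<in> carrier G" for x
      using that \<phi>1\<alpha> image_rcoset hom_in_carrier[OF fk_epiD(1)[OF \<phi>1]] by simp
  qed
  moreover have "cpair (G1 Mod N) (quotient_group_topology T1 G1 N) (\<lambda>U. \<alpha>1 ` U)"
    using Q.compact_group_Mod aut by (simp add: cpair_def)
  ultimately show ?thesis
    unfolding cocodom_via_def using Q.fk_epi_rcoset \<psi>2 image_rcoset by blast
qed

lemma cocomm_via_imp_cocodom_via:
  fixes G1 :: "'a monoid"
  assumes c1: "cpair G1 T1 \<alpha>1" and c2: "cpair G2 T2 \<alpha>2"
    and "cocomm_via TYPE('c) G1 T1 \<alpha>1 G2 T2 \<alpha>2"
  shows "cocodom_via TYPE('a set) G1 T1 \<alpha>1 G2 T2 \<alpha>2"
proof -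
  obtain G :: "'c monoid" and T \<alpha> \<phi>1 \<phi>2 where G: "cpair G T \<alpha>"
    and \<phi>1: "fk_epi G T G1 T1 \<phi>1" and \<phi>2: "fk_epi G T G2 T2 \<phi>2"
    and \<phi>1\<alpha>: "\<forall>x\<in>carrier G. \<phi>1 (\<alpha> x) = \<alpha>1 (\<phi>1 x)"
    and \<phi>2\<alpha>: "\<forall>x\<in>carrier G. \<phi>2 (\<alpha> x) = \<alpha>2 (\<phi>2 x)"
    using assms(3) unfolding cocomm_via_def by blast
  have groups: "group G" "group G1" "group G2"
    using G c1 c2 by (simp_all add: cpair_def compact_group_def)
  have hom: "group_hom G G1 \<phi>1" "group_hom G G2 \<phi>2"
    using groups fk_epiD(1)[OF \<phi>1] fk_epiD(1)[OF \<phi>2] by (simp_all add: group_hom_def group_hom_axioms_def)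
  define N where "N = \<phi>1 ` kernel G G2 \<phi>2"
  have "N \<lhd> G1"
    unfolding N_def
    by (rule normal.surj_hom_normal_subgroup[OF group_hom.normal_kernel[OF hom(2)] hom(1) fk_epiD(3)[OF \<phi>1]])
  moreover have "finite N"
    unfolding N_def using fk_epiD(4)[OF \<phi>2] by simp
  ultimately have "compact_finite_quotient N G1 T1"
    using c1 by (simp add: compact_finite_quotient_def compact_finite_quotient_axioms_def cpair_def)
  moreover have "\<alpha>1 ` N \<subseteq> N"
  proof
    fix z assume "z \<in> \<alpha>1 ` N"
    then obtain k where k: "k \<in> kernel G G2 \<phi>2" "z = \<alpha>1 (\<phi>1 k)"
      by (auto simp: N_def)
    have "\<alpha> k \<in> kernel G G2 \<phi>2"
      using k(1) \<phi>2\<alpha> G c2 group_hom.hom_one[of G2 G2 \<alpha>2] groups(3)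
      by (auto simp: kernel_def cpair_def top_group_aut_def iso_def hom_in_carrier group_hom_def group_hom_axioms_def)
    moreover have "z = \<phi>1 (\<alpha> k)"
      using k \<phi>1\<alpha> by (simp add: kernel_def)
    ultimately show "z \<in> N"
      by (simp add: N_def)
  qed
  ultimately show ?thesis
    using cocodom_via_FactGroup[OF G c1 c2 \<phi>1 \<phi>2 \<phi>1\<alpha> \<phi>2\<alpha>] N_def by blast
qed

theorem proposition6p15:
  fixes G1 :: "'a monoid" and T1 :: "'a topology" and a1 :: "'a \<Rightarrow> 'a"
    and G2 :: "'b monoid" and T2 :: "'b topology" and a2 :: "'b \<Rightarrow> 'b"
    and G3 :: "'e monoid" and T3 :: "'e topology" and a3 :: "'e \<Rightarrow> 'e"
  assumes "cpair G1 T1 a1" and "cpair G2 T2 a2" and "cpair G3 T3 a3"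
  shows "cocomm_via TYPE('a) G1 T1 a1 G1 T1 a1
    \<and> (cocomm_via TYPE('c) G1 T1 a1 G2 T2 a2 \<longrightarrow> cocomm_via TYPE('c) G2 T2 a2 G1 T1 a1)
    \<and> (cocomm_via TYPE('c) G1 T1 a1 G2 T2 a2 \<and> cocomm_via TYPE('d) G2 T2 a2 G3 T3 a3
           \<longrightarrow> cocomm_via TYPE('c \<times> 'd) G1 T1 a1 G3 T3 a3)
    \<and> (cocomm_via TYPE('c) G1 T1 a1 G2 T2 a2 \<longrightarrow> cocodom_via TYPE('a set) G1 T1 a1 G2 T2 a2)
    \<and> (cocodom_via TYPE('l) G1 T1 a1 G2 T2 a2 \<longrightarrow> cocomm_via TYPE('a \<times> 'b) G1 T1 a1 G2 T2 a2)"
proof (intro conjI impI)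
  show "cocomm_via TYPE('a) G1 T1 a1 G1 T1 a1"
    by (rule cocomm_via_refl[OF assms(1)])
next
  assume "cocomm_via TYPE('c) G1 T1 a1 G2 T2 a2"
  then show "cocomm_via TYPE('c) G2 T2 a2 G1 T1 a1"
    by (rule cocomm_via_sym)
next
  assume "cocomm_via TYPE('c) G1 T1 a1 G2 T2 a2 \<and> cocomm_via TYPE('d) G2 T2 a2 G3 T3 a3"
  then show "cocomm_via TYPE('c \<times> 'd) G1 T1 a1 G3 T3 a3"
    using cocomm_via_trans[OF assms] by blast
next
  assume "cocomm_via TYPE('c) G1 T1 a1 G2 T2 a2"
  then show "cocodom_via TYPE('a set) G1 T1 a1 G2 T2 a2"
    by (rule cocomm_via_imp_cocodom_via[OF assms(1,2)])
next
  assume "cocodom_via TYPE('l) G1 T1 a1 G2 T2 a2"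
  then show "cocomm_via TYPE('a \<times> 'b) G1 T1 a1 G2 T2 a2"
    by (rule cocodom_via_imp_cocomm_via[OF assms(1,2)])
qed

end
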